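(* Let $G$ be the 3-dimensional Gauss map on the tetrahedron $S$. For every point $(x,y,z)\in S$ with $x,y,z\in\mathbb{Q}$ there exists $k\ge0$ with $G^k(x,y,z)=(0,0,0)$.
   Context: Let $S = \{(x,y,z)\in\mathbb{R}^3 : 0\le z\le y\le x\le 1\}$. For integers $n\ge1$ define the pieces $\mathbb{A}_n = \{\frac1{n+1} < x \le \frac1n,\ 0\le z\le y\le 1-nx\}$, $\mathbb{B}_n = \{0\le z\le 1-nx < y \le x\}$, $\mathbb{C}_n = \{1-nx < z \le y \le x \le \frac1n\}$ (all subsets of $S$); together with $\{(0,0,0)\}$ they partition $S$. The 3-dimensional Gauss map $G:S\to S$ is $G(0,0,0)=(0,0,0)$, $G(x,y,z)=\left(\frac1x-n,\frac yx,\frac zx\right)$ on $\mathbb{A}_n$, $G(x,y,z)=\left(\frac{1-y}{x}-n+1,\frac{x-y+z}{x},\frac{x-y}{x}\right)$ on $\mathbb{B}_n$, $G(x,y,z)=\left(\frac{1-z}{x}-n+1,\frac{x-z}{x},\frac{y-z}{x}\right)$ on $\mathbb{C}_n$. *)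

theory Defs
  imports "HOL-Analysis.Analysis"
begin

type_synonym pt = "real \<times> real \<times> real"

definition S :: "pt set" where
  "S = {(x,y,z). 0 \<le> z \<and> z \<le> y \<and> y \<le> x \<and> x \<le> 1}"

definition pieceA :: "nat \<Rightarrow> pt set" where
  "pieceA n = {(x,y,z). (x,y,z) \<in> S \<and> 1 / real (n+1) < x \<and> x \<le> 1 / real n
      \<and> 0 \<le> z \<and> z \<le> y \<and> y \<le> 1 - real n * x}"

definition pieceB :: "nat \<Rightarrow> pt set" where
  "pieceB n = {(x,y,z). (x,y,z) \<in> S \<and> 0 \<le> z \<and> z \<le> 1 - real n * x
      \<and> 1 - real n * x < y \<and> y \<le> x}"

definition pieceC :: "nat \<Rightarrow> pt set" where
  "pieceC n = {(x,y,z). (x,y,z) \<in> S \<and> 1 - real n * x < z \<and> z \<le> y \<and> y \<le> x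
      \<and> x \<le> 1 / real n}"

text \<open>The 3-dimensional Gauss map. The pieces (n >= 1) together with the origin
partition S, so the index n and the piece are uniquely determined on S.
Outside S the value is irrelevant (arbitrary).\<close>
definition gauss3 :: "pt \<Rightarrow> pt" where
  "gauss3 p = (case p of (x,y,z) \<Rightarrow>
     if p = (0,0,0) then (0,0,0)
     else if \<exists>n\<ge>1. p \<in> pieceA n then
       (let n = THE n. n \<ge> 1 \<and> p \<in> pieceA n in (1/x - real n, y/x, z/x))
     else if \<exists>n\<ge>1. p \<in> pieceB n then
       (let n = THE n. n \<ge> 1 \<and> p \<in> pieceB n in
          ((1-y)/x - real n + 1, (x-y+z)/x, (x-y)/x))
     else if \<exists>n\<ge>1. p \<in> pieceC n then
       (let n = THE n. n \<ge> 1 \<and> p \<in> pieceC n in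
          ((1-z)/x - real n + 1, (x-z)/x, (y-z)/x))
     else undefined)"

end

theory Submission
  imports Defs
begin

text \<open>A rational point has a common denominator N. On each piece the Gauss map divides by x
  integer combinations of 1, x, y, z, so N*x is a common denominator of the image. The image
  has first coordinate x' < 1, so the nonnegative integer N*x (the numerator of the first
  coordinate) becomes N*x*x' < N*x: it strictly decreases along the orbit until the origin.\<close>

definition common_denominator :: "real \<Rightarrow> pt \<Rightarrow> bool" where
  "common_denominator N p \<longleftrightarrow>
     (case p of (x, y, z) \<Rightarrow> N \<in> \<int> \<and> N * x \<in> \<int> \<and> N * y \<in> \<int> \<and> N * z \<in> \<int>)"

lemma mem_S_iff: "(x, y, z) \<in> S \<longleftrightarrow> 0 \<le> z \<and> z \<le> y \<and> y \<le> x \<and> x \<le> (1::real)"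
  by (simp add: S_def)

lemma rational_point_common_denominator:
  assumes "x \<in> \<rat>" "y \<in> \<rat>" "z \<in> \<rat>"
  obtains N where "N > 0" "common_denominator N (x, y, z)"
proof -
  obtain a1 b1 where 1: "b1 > 0" "x = of_int a1 / of_int b1" using assms(1) by (auto elim: Rats_cases')
  obtain a2 b2 where 2: "b2 > 0" "y = of_int a2 / of_int b2" using assms(2) by (auto elim: Rats_cases')
  obtain a3 b3 where 3: "b3 > 0" "z = of_int a3 / of_int b3" using assms(3) by (auto elim: Rats_cases')
  define N :: real where "N = of_int (b1 * b2 * b3)"
  have "N * x = of_int (a1 * b2 * b3)" "N * y = of_int (a2 * b1 * b3)" "N * z = of_int (a3 * b1 * b2)"
    using 1 2 3 by (simp_all add: N_def field_simps)
  moreover have "N \<in> \<int>" by (simp add: N_def)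
  ultimately have "common_denominator N (x, y, z)"
    by (simp add: common_denominator_def)
  moreover have "N > 0" using 1 2 3 by (simp add: N_def)
  ultimately show thesis by (rule that[rotated])
qed

lemma piece_bounds:
  assumes "(x, y, z) \<in> pieceA n \<union> pieceB n \<union> pieceC n" "n \<ge> 1"
  shows "0 < x" and "real n * x \<le> 1" and "1 < (real n + 1) * x"
proof -
  show bounds: "real n * x \<le> 1" "1 < (real n + 1) * x"
    using assms by (auto simp: pieceA_def pieceB_def pieceC_def S_def field_simps)
  then have "0 < (real n + 1) * x" by linarith
  then show "0 < x" by (simp add: zero_less_mult_iff)
qed

lemma piece_index_eq_floor:
  assumes "(x, y, z) \<in> pieceA n \<union> pieceB n \<union> pieceC n" "n \<ge> 1"
  shows "\<lfloor>1 / x\<rfloor> = int n"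
  using piece_bounds[OF assms] by (simp add: floor_eq_iff field_simps)

lemma piece_index_unique:
  assumes "p \<in> pieceA n \<union> pieceB n \<union> pieceC n" "n \<ge> 1"
    and "p \<in> pieceA m \<union> pieceB m \<union> pieceC m" "m \<ge> 1"
  shows "n = m"
proof -
  obtain x y z where "p = (x, y, z)" by (cases p) auto
  then show ?thesis using assms piece_index_eq_floor[of x y z] by (metis of_nat_eq_iff)
qed

lemma pieces_disjoint:
  "pieceA n \<inter> pieceB n = {}" "pieceA n \<inter> pieceC n = {}" "pieceB n \<inter> pieceC n = {}"
  by (auto simp: pieceA_def pieceB_def pieceC_def)

lemma gauss3_pieceA:
  assumes "(x, y, z) \<in> pieceA n" "n \<ge> 1"
  shows "gauss3 (x, y, z) = (1 / x - real n, y / x, z / x)"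
proof -
  have nonzero: "(x, y, z) \<noteq> (0, 0, 0)" using piece_bounds(1)[of x y z n] assms by auto
  have inA: "\<exists>m\<ge>1. (x, y, z) \<in> pieceA m" using assms by blast
  have index: "(THE m. m \<ge> 1 \<and> (x, y, z) \<in> pieceA m) = n"
    by (intro the_equality) (use assms piece_index_unique[of "(x, y, z)" n] in blast)+
  show ?thesis
    unfolding gauss3_def prod.case if_not_P[OF nonzero] if_P[OF inA] Let_def index ..
qed

lemma gauss3_pieceB:
  assumes "(x, y, z) \<in> pieceB n" "n \<ge> 1"
  shows "gauss3 (x, y, z) = ((1 - y) / x - real n + 1, (x - y + z) / x, (x - y) / x)"
proof -
  have nonzero: "(x, y, z) \<noteq> (0, 0, 0)" using piece_bounds(1)[of x y z n] assms by auto
  have notA: "\<not> (\<exists>m\<ge>1. (x, y, z) \<in> pieceA m)"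
    using assms pieces_disjoint(1)[of n] piece_index_unique[of "(x, y, z)" n] by blast
  have inB: "\<exists>m\<ge>1. (x, y, z) \<in> pieceB m" using assms by blast
  have index: "(THE m. m \<ge> 1 \<and> (x, y, z) \<in> pieceB m) = n"
    by (intro the_equality) (use assms piece_index_unique[of "(x, y, z)" n] in blast)+
  show ?thesis
    unfolding gauss3_def prod.case if_not_P[OF nonzero] if_not_P[OF notA] if_P[OF inB] Let_def index ..
qed

lemma gauss3_pieceC:
  assumes "(x, y, z) \<in> pieceC n" "n \<ge> 1"
  shows "gauss3 (x, y, z) = ((1 - z) / x - real n + 1, (x - z) / x, (y - z) / x)"
proof -
  have nonzero: "(x, y, z) \<noteq> (0, 0, 0)" using piece_bounds(1)[of x y z n] assms by auto
  have notA: "\<not> (\<exists>m\<ge>1. (x, y, z) \<in> pieceA m)"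
    using assms pieces_disjoint(2)[of n] piece_index_unique[of "(x, y, z)" n] by blast
  have notB: "\<not> (\<exists>m\<ge>1. (x, y, z) \<in> pieceB m)"
    using assms pieces_disjoint(3)[of n] piece_index_unique[of "(x, y, z)" n] by blast
  have inC: "\<exists>m\<ge>1. (x, y, z) \<in> pieceC m" using assms by blast
  have index: "(THE m. m \<ge> 1 \<and> (x, y, z) \<in> pieceC m) = n"
    by (intro the_equality) (use assms piece_index_unique[of "(x, y, z)" n] in blast)+
  show ?thesis
    unfolding gauss3_def prod.case if_not_P[OF nonzero] if_not_P[OF notA] if_not_P[OF notB] if_P[OF inC]
      Let_def index ..
qed

lemma nonzero_point_in_piece:
  assumes "(x, y, z) \<in> S" "(x, y, z) \<noteq> (0, 0, 0)"
  obtains n where "n \<ge> 1" "(x, y, z) \<in> pieceA n \<union> pieceB n \<union> pieceC n"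
proof -
  have "0 < x" "x \<le> 1" using assms by (auto simp: mem_S_iff)
  define n where "n = nat \<lfloor>1 / x\<rfloor>"
  have "1 \<le> 1 / x" using \<open>0 < x\<close> \<open>x \<le> 1\<close> by simp
  then have "real n \<le> 1 / x" "1 / x < real n + 1" "n \<ge> 1"
    unfolding n_def by linarith+
  then have "1 / real (n + 1) < x" "x \<le> 1 / real n"
    using \<open>0 < x\<close> by (simp_all add: field_simps)
  with assms have "(x, y, z) \<in> pieceA n \<union> pieceB n \<union> pieceC n"
    by (auto simp: pieceA_def pieceB_def pieceC_def mem_S_iff)
  with \<open>n \<ge> 1\<close> show thesis by (rule that)
qed

lemma scaled_point_mem_S:
  assumes "0 < x" "0 \<le> c" "c \<le> b" "b \<le> a" "a < x"
  shows "(a / x, b / x, c / x) \<in> S" and "a / x < 1"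
  using assms by (simp_all add: mem_S_iff divide_right_mono)

lemma common_denominator_scaled:
  assumes "x \<noteq> 0" "N * x \<in> \<int>" "N * a \<in> \<int>" "N * b \<in> \<int>" "N * c \<in> \<int>"
  shows "common_denominator (N * x) (a / x, b / x, c / x)"
  using assms by (simp add: common_denominator_def)

lemma gauss3_as_scaled_point:
  assumes "(x, y, z) \<in> S" "(x, y, z) \<noteq> (0, 0, 0)" "common_denominator N (x, y, z)"
  obtains a b c where "gauss3 (x, y, z) = (a / x, b / x, c / x)"
    and "0 \<le> c" "c \<le> b" "b \<le> a" "a < x"
    and "N * a \<in> \<int>" "N * b \<in> \<int>" "N * c \<in> \<int>"
proof -
  obtain n where n: "n \<ge> 1" "(x, y, z) \<in> pieceA n \<union> pieceB n \<union> pieceC n"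
    using nonzero_point_in_piece[OF assms(1,2)] .
  note bounds = piece_bounds[OF n(2,1)]
  have ints: "N \<in> \<int>" "N * x \<in> \<int>" "N * y \<in> \<int>" "N * z \<in> \<int>"
    using assms(3) by (simp_all add: common_denominator_def)
  have nNx: "N * (real n * x) \<in> \<int>"
    using Ints_mult[OF Ints_of_nat ints(2), of n] by (simp add: mult.left_commute)
  from n(2) consider "(x, y, z) \<in> pieceA n" | "(x, y, z) \<in> pieceB n" | "(x, y, z) \<in> pieceC n"
    by blast
  then show thesis
  proof cases
    case 1
    have "gauss3 (x, y, z) = ((1 - real n * x) / x, y / x, z / x)"
      using gauss3_pieceA[OF 1 n(1)] bounds(1) by (simp add: field_simps)
    moreover have "0 \<le> z" "z \<le> y" "y \<le> 1 - real n * x" "1 - real n * x < x"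
      using 1 bounds by (auto simp: pieceA_def algebra_simps)
    moreover have "N * (1 - real n * x) \<in> \<int>"
      unfolding right_diff_distrib using ints nNx by (simp add: Ints_diff)
    ultimately show thesis using that ints by blast
  next
    case 2
    have "gauss3 (x, y, z) = ((1 - real n * x + x - y) / x, (x - y + z) / x, (x - y) / x)"
      using gauss3_pieceB[OF 2 n(1)] bounds(1) by (simp add: field_simps)
    moreover have "0 \<le> x - y" "x - y \<le> x - y + z" "x - y + z \<le> 1 - real n * x + x - y"
      "1 - real n * x + x - y < x"
      using 2 by (auto simp: pieceB_def)
    moreover have "N * (1 - real n * x + x - y) \<in> \<int>" "N * (x - y + z) \<in> \<int>" "N * (x - y) \<in> \<int>"
      unfolding distrib_left right_diff_distrib using ints nNx by (simp_all add: Ints_diff Ints_add)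
    ultimately show thesis using that by blast
  next
    case 3
    have "gauss3 (x, y, z) = ((1 - real n * x + x - z) / x, (x - z) / x, (y - z) / x)"
      using gauss3_pieceC[OF 3 n(1)] bounds(1) by (simp add: field_simps)
    moreover have "0 \<le> y - z" "y - z \<le> x - z" "x - z \<le> 1 - real n * x + x - z"
      "1 - real n * x + x - z < x"
      using 3 bounds by (auto simp: pieceC_def S_def)
    moreover have "N * (1 - real n * x + x - z) \<in> \<int>" "N * (x - z) \<in> \<int>" "N * (y - z) \<in> \<int>"
      unfolding distrib_left right_diff_distrib using ints nNx by (simp_all add: Ints_diff Ints_add)
    ultimately show thesis using that by blast
  qed
qed

lemma gauss3_step:
  assumes "p \<in> S" "p \<noteq> (0, 0, 0)" "common_denominator N p"
  shows "gauss3 p \<in> S" and "fst (gauss3 p) < 1" and "common_denominator (N * fst p) (gauss3 p)"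
proof -
  obtain x y z where p: "p = (x, y, z)" by (cases p)
  obtain a b c where g: "gauss3 (x, y, z) = (a / x, b / x, c / x)"
    and order: "0 \<le> c" "c \<le> b" "b \<le> a" "a < x"
    and ints: "N * a \<in> \<int>" "N * b \<in> \<int>" "N * c \<in> \<int>"
    using gauss3_as_scaled_point assms unfolding p by blast
  have "0 < x" using order by linarith
  moreover have "N * x \<in> \<int>" using assms(3) by (simp add: p common_denominator_def)
  ultimately show "gauss3 p \<in> S" "fst (gauss3 p) < 1" "common_denominator (N * fst p) (gauss3 p)"
    using scaled_point_mem_S[OF _ order] common_denominator_scaled[OF _ _ ints] by (simp_all add: p g)
qed

lemma gauss3_reaches_origin:
  assumes "p \<in> S" "N > 0" "common_denominator N p"
  shows "\<exists>k. (gauss3 ^^ k) p = (0, 0, 0)"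
  using assms
proof (induction "nat \<lfloor>N * fst p\<rfloor>" arbitrary: p N rule: less_induct)
  case less
  show ?case
  proof (cases "p = (0, 0, 0)")
    case True
    then show ?thesis by (metis funpow_0)
  next
    case False
    note step = gauss3_step[OF less.prems(1) False less.prems(3)]
    have "0 < fst p"
      using less.prems(1) False by (cases p) (auto simp: mem_S_iff)
    then have pos: "0 < N * fst p" using less.prems(2) by simp
    obtain i where i: "N * fst p * fst (gauss3 p) = of_int i"
      using step(3) by (cases "gauss3 p") (auto simp: common_denominator_def elim: Ints_cases)
    obtain j where j: "N * fst p = of_int j"
      using step(3) by (cases "gauss3 p") (auto simp: common_denominator_def elim: Ints_cases)
    have "N * fst p * fst (gauss3 p) < N * fst p"
      using mult_strict_left_mono[OF step(2) pos] by simp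
    with i j pos have "nat \<lfloor>N * fst p * fst (gauss3 p)\<rfloor> < nat \<lfloor>N * fst p\<rfloor>"
      by simp
    then obtain k where "(gauss3 ^^ k) (gauss3 p) = (0, 0, 0)"
      using less.hyps step(1,3) pos by blast
    then show ?thesis by (metis funpow_Suc_right o_apply)
  qed
qed

theorem mainTheorem13:
  fixes x y z :: real
  assumes "(x, y, z) \<in> S" and "x \<in> \<rat>" and "y \<in> \<rat>" and "z \<in> \<rat>"
  shows "\<exists>k::nat. (gauss3 ^^ k) (x, y, z) = (0, 0, 0)"
proof -
  obtain N where "N > 0" "common_denominator N (x, y, z)"
    using rational_point_common_denominator[OF assms(2-4)] .
  then show ?thesis using gauss3_reaches_origin[OF assms(1)] by blast
qed

end
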